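(* Let $\mathcal{M}$ be a family of probability measures on $\mathbb{R}$ satisfying: $\inf_{p\in\mathcal{M}}\mu_p>0$; $\sup_{p\in\mathcal{M}}E_p[e^{\tau|X|}]<\infty$ for some $\tau>0$; each $p\in\mathcal{M}$ equals $(1-\lambda_p)\Phi_p+\lambda_p\Psi_p$ with $0\le\lambda_p<1$, $\Phi_p,\Psi_p$ probability measures, $\Phi_p$ having a density $\phi_p$; $\sup_p\lambda_p<1$; and there is $T\in(0,\infty)$ with $\phi_p\in C_0^2((-T,T))$ for all $p$ and $\sup_p\int_{-T}^T|\phi_p''|<\infty$. Then there exists $\eta>0$ such that for all $p\in\mathcal{M}$, $\hat p(z):=E_p[e^{izX}]$ is analytic on $D_\eta=\{z\in\mathbb{C}:|\Im(z)|\le\eta\}$ and $\hat p(z)\ne1$ for $z\in D_\eta\setminus\{0\}$. Furthermore, $$L_\eta:=\sup_{z\in D_\eta\setminus\{0\},\,p\in\mathcal{M}}|K_p(z)|<\infty,\qquad K_p(z):=\frac{1}{1-\hat p(z)}-\frac{1}{-i\mu_pz}.$$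
   Context: For a probability measure $p$ on $\mathbb{R}$, $\mu_p$ denotes its mean and $E_p$ expectation when $X\sim p$. $C_0^2((-T,T))$ denotes $C^2$ functions with compact support in $(-T,T)$. *)

theory Defs
  imports "HOL-Probability.Probability"
begin

definition mean :: "real measure \<Rightarrow> real" where
  "mean p = (\<integral>x. x \<partial>p)"

definition cfz :: "real measure \<Rightarrow> complex \<Rightarrow> complex" where
  "cfz p z = (\<integral>x. exp (\<i> * z * complex_of_real x) \<partial>p)"

definition strip :: "real \<Rightarrow> complex set" where
  "strip \<eta> = {z. \<bar>Im z\<bar> \<le> \<eta>}"

definition Kfun :: "real measure \<Rightarrow> complex \<Rightarrow> complex" where
  "Kfun p z = 1 / (1 - cfz p z) - 1 / (- \<i> * complex_of_real (mean p) * z)"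

end

theory Submission
  imports Defs "HOL-Complex_Analysis.Cauchy_Integral_Formula"
begin

text \<open>
  The exponential moment makes \<open>cfz p\<close> a power series around every point of a strip, with
  uniform control: near \<open>0\<close> Taylor's formula gives \<open>cfz p z = 1 + \<i> \<mu>\<^sub>p z + O(\<bar>z\<bar>\<^sup>2)\<close>, so
  \<open>1 - cfz p z\<close> is close to \<open>-\<i> \<mu>\<^sub>p z\<close> and \<open>Kfun p z\<close> is bounded because \<open>\<mu>\<^sub>p \<ge> c > 0\<close>; and
  moving \<open>z\<close> off the real axis changes \<open>cfz p z\<close> only by \<open>O(\<bar>Im z\<bar>)\<close>.  Away from \<open>0\<close> it therefore
  suffices to bound \<open>Re (1 - cfz p x) = E\<^sub>p[1 - cos (x X)]\<close> from below, uniformly for real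
  \<open>\<bar>x\<bar> \<ge> \<rho>\<close>.  Each \<open>p\<close> dominates \<open>(1 - \<lambda>\<^sub>p) \<Phi>\<^sub>p\<close> with \<open>1 - \<lambda>\<^sub>p\<close> bounded below, and the densities
  \<open>\<phi>\<^sub>p\<close> are supported in \<open>[-T, T]\<close> and uniformly bounded by \<open>2 T \<integral>\<bar>\<phi>\<^sub>p''\<bar>\<close>.  Such a density
  puts at most half of its mass on the at most \<open>T \<bar>x\<bar> / \<pi> + 5\<close> intervals of length \<open>2 w / \<bar>x\<bar>\<close>
  around the points \<open>2 \<pi> k / x\<close> where \<open>cos (x t)\<close> is close to \<open>1\<close>, and off them
  \<open>1 - cos (x t) \<ge> 1 - cos w\<close>.
\<close>

lemma sum_exp_series_le_exp:
  fixes r :: real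
  assumes "0 \<le> r" "finite K"
  shows "(\<Sum>k\<in>K. r ^ k / fact k) \<le> exp r"
  using assms summable_exp_generic[of r]
  by (auto simp: exp_def divide_inverse ac_simps intro!: sum_le_suminf)

lemma abs_le_exp_mult_abs:
  fixes a x :: real
  assumes "0 < a"
  shows "\<bar>x\<bar> \<le> exp (a * \<bar>x\<bar>) / a"
  using sum_exp_series_le_exp[of "a * \<bar>x\<bar>" "{1}"] assms by (simp add: field_simps)

lemma power2_le_exp_mult_abs:
  fixes a x :: real
  assumes "0 < a"
  shows "x\<^sup>2 \<le> 2 * exp (a * \<bar>x\<bar>) / a\<^sup>2"
  using sum_exp_series_le_exp[of "a * \<bar>x\<bar>" "{2}"] assms
  by (simp add: field_simps)

lemma norm_exp_sub_one_sub_le: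
  fixes z :: complex
  shows "norm (exp z - 1 - z) \<le> norm z ^ 2 * exp (norm z)"
  using Taylor_exp_field[of z "Suc 0"] by (simp add: mult.commute power2_eq_square diff_diff_eq)

lemma abs_exp_sub_one_le:
  fixes a :: real
  shows "\<bar>exp a - 1\<bar> \<le> \<bar>a\<bar> * exp \<bar>a\<bar>"
  using Taylor_exp_field[of a 0] by (simp add: mult.commute)

lemma norm_exp_i_mult_le:
  assumes "\<bar>Im z\<bar> \<le> s"
  shows "norm (exp (\<i> * z * of_real x)) \<le> exp (s * \<bar>x\<bar>)"
proof -
  have "- Im z * x \<le> \<bar>Im z\<bar> * \<bar>x\<bar>"
    by (metis abs_ge_minus_self abs_mult mult_minus_left)
  also have "\<dots> \<le> s * \<bar>x\<bar>"
    using assms by (rule mult_right_mono) simp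
  finally show ?thesis
    by simp
qed

lemma norm_sum_exp_series_le:
  assumes "\<bar>Im z\<bar> + norm (w - z) \<le> s" "finite K"
  shows "norm (\<Sum>k\<in>K. exp (\<i> * z * of_real x) * (\<i> * of_real x * (w - z)) ^ k / fact k)
           \<le> exp (s * \<bar>x\<bar>)"
proof -
  have "norm (\<Sum>k\<in>K. exp (\<i> * z * of_real x) * (\<i> * of_real x * (w - z)) ^ k / fact k)
      \<le> norm (exp (\<i> * z * of_real x)) * (\<Sum>k\<in>K. (norm (w - z) * \<bar>x\<bar>) ^ k / fact k)"
    by (rule order_trans[OF norm_sum])
       (simp add: norm_mult norm_divide norm_power sum_distrib_left mult_ac)
  also have "\<dots> \<le> exp (\<bar>Im z\<bar> * \<bar>x\<bar>) * exp (norm (w - z) * \<bar>x\<bar>)"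
    by (intro mult_mono norm_exp_i_mult_le sum_exp_series_le_exp assms(2)) (auto intro: sum_nonneg)
  also have "\<dots> \<le> exp (s * \<bar>x\<bar>)"
    using mult_right_mono[OF assms(1) abs_ge_zero[of x]] by (simp add: exp_add[symmetric] algebra_simps)
  finally show ?thesis .
qed

lemma norm_inverse_diff_le:
  fixes a d :: "'a::real_normed_field"
  assumes "norm (d - a) \<le> norm d / 2" "d \<noteq> 0"
  shows "a \<noteq> 0" "norm (1 / a - 1 / d) \<le> 2 * norm (d - a) / norm d ^ 2"
proof -
  have "norm d \<le> norm a + norm (d - a)"
    using norm_triangle_ineq[of a "d - a"] by simp
  then have a_large: "norm d / 2 \<le> norm a"
    using assms(1) by linarith
  then show "a \<noteq> 0"
    using assms(2) by auto
  then have "norm (1 / a - 1 / d) = norm (d - a) / (norm a * norm d)"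
    using assms(2) by (simp add: field_simps norm_divide norm_mult)
  also have "\<dots> \<le> norm (d - a) / (norm d / 2 * norm d)"
    using a_large assms(2) \<open>a \<noteq> 0\<close> by (intro divide_left_mono mult_right_mono) auto
  also have "\<dots> = 2 * norm (d - a) / norm d ^ 2"
    by (simp add: power2_eq_square)
  finally show "norm (1 / a - 1 / d) \<le> 2 * norm (d - a) / norm d ^ 2" .
qed

lemma Kfun_bound_away_from_0:
  assumes "0 < c" "c \<le> mean p" "0 < r" "r \<le> norm z" "0 < \<delta>" "\<delta> \<le> norm (1 - cfz p z)"
  shows "cfz p z \<noteq> 1" "norm (Kfun p z) \<le> 1 / \<delta> + 1 / (c * r)"
proof -
  show "cfz p z \<noteq> 1"
    using assms by auto
  have "norm (Kfun p z) \<le> norm (1 / (1 - cfz p z)) + norm (1 / (- \<i> * of_real (mean p) * z))"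
    unfolding Kfun_def by (rule norm_triangle_ineq4)
  also have "\<dots> = 1 / norm (1 - cfz p z) + 1 / (mean p * norm z)"
    using assms by (simp add: norm_divide norm_mult)
  also have "\<dots> \<le> 1 / \<delta> + 1 / (c * r)"
    using assms by (intro add_mono divide_left_mono mult_mono mult_pos_pos) auto
  finally show "norm (Kfun p z) \<le> 1 / \<delta> + 1 / (c * r)" .
qed

section \<open>Characteristic functions with an exponential moment\<close>

lemma Re_one_minus_cfz_of_real:
  assumes "prob_space p" "sets p = sets borel"
  shows "Re (1 - cfz p (of_real x)) = (\<integral>t. 1 - cos (x * t) \<partial>p)"
proof -
  interpret prob_space p by fact
  have meas: "f \<in> borel_measurable p" if "continuous_on UNIV f" for f :: "real \<Rightarrow> 'a::topological_space"
    using borel_measurable_continuous_onI[OF that] measurable_cong_sets[OF assms(2) refl] by blast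
  have "integrable p (\<lambda>t. exp (\<i> * of_real x * of_real t))"
    by (intro integrable_const_bound[where B=1] meas continuous_intros) simp
  moreover have "integrable p (\<lambda>t. cos (x * t))"
    by (intro integrable_const_bound[where B=1] meas continuous_intros) simp
  ultimately show ?thesis
    by (simp add: cfz_def prob_space Re_exp mult_ac Bochner_Integration.integral_diff flip: integral_Re)
qed

locale exp_moment = prob_space p for p :: "real measure" +
  fixes \<tau> B :: real
  assumes sets_eq_borel: "sets p = sets borel"
    and tau_pos: "0 < \<tau>"
    and nn_integral_exp_le: "(\<integral>\<^sup>+ x. ennreal (exp (\<tau> * \<bar>x\<bar>)) \<partial>p) \<le> ennreal B"
begin

lemma borel_measurable_p: "f \<in> borel_measurable borel \<Longrightarrow> f \<in> borel_measurable p"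
  using measurable_cong_sets[OF sets_eq_borel refl] by metis

lemma integrable_exp_moment: "integrable p (\<lambda>x. exp (\<tau> * \<bar>x\<bar>))"
proof (rule integrableI_bounded)
  show "(\<lambda>x. exp (\<tau> * \<bar>x\<bar>)) \<in> borel_measurable p"
    by (intro borel_measurable_p borel_measurable_continuous_onI continuous_intros)
  show "(\<integral>\<^sup>+ x. ennreal (norm (exp (\<tau> * \<bar>x\<bar>))) \<partial>p) < \<infinity>"
    using nn_integral_exp_le by (simp add: order.strict_trans1)
qed

lemma integral_exp_moment_bounds: "1 \<le> (\<integral>x. exp (\<tau> * \<bar>x\<bar>) \<partial>p)" "(\<integral>x. exp (\<tau> * \<bar>x\<bar>) \<partial>p) \<le> B"
proof -
  have "(\<integral>x. 1 \<partial>p) \<le> (\<integral>x. exp (\<tau> * \<bar>x\<bar>) \<partial>p)"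
    using integrable_exp_moment tau_pos by (intro integral_mono) auto
  then show one: "1 \<le> (\<integral>x. exp (\<tau> * \<bar>x\<bar>) \<partial>p)"
    by (simp add: prob_space)
  have "ennreal (\<integral>x. exp (\<tau> * \<bar>x\<bar>) \<partial>p) \<le> ennreal B"
    using nn_integral_exp_le integrable_exp_moment by (simp add: nn_integral_eq_integral[symmetric])
  then show "(\<integral>x. exp (\<tau> * \<bar>x\<bar>) \<partial>p) \<le> B"
    using one by (simp add: ennreal_le_iff2)
qed

lemma exp_moment_bound_ge_1: "1 \<le> B"
  using integral_exp_moment_bounds by linarith

lemma integrable_exp_dominated:
  fixes g :: "real \<Rightarrow> 'a::{banach, second_countable_topology}"
  assumes "g \<in> borel_measurable borel" "\<And>x. norm (g x) \<le> C * exp (\<tau> * \<bar>x\<bar>)"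
  shows "integrable p g"
proof (rule Bochner_Integration.integrable_bound)
  show "integrable p (\<lambda>x. C * exp (\<tau> * \<bar>x\<bar>))"
    using integrable_exp_moment by simp
  show "AE x in p. norm (g x) \<le> norm (C * exp (\<tau> * \<bar>x\<bar>))"
    using assms(2) by (intro AE_I2) (metis abs_ge_self order_trans real_norm_def)
qed (rule borel_measurable_p[OF assms(1)])

lemma norm_integral_exp_dominated:
  fixes g :: "real \<Rightarrow> 'a::{banach, second_countable_topology}"
  assumes "g \<in> borel_measurable borel" "\<And>x. norm (g x) \<le> C * exp (\<tau> * \<bar>x\<bar>)"
  shows "norm (\<integral>x. g x \<partial>p) \<le> C * B"
proof -
  have "norm (g 0) \<le> C"
    using assms(2)[of 0] by simp
  then have "0 \<le> C"
    using norm_ge_zero order_trans by blast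
  have "norm (\<integral>x. g x \<partial>p) \<le> (\<integral>x. C * exp (\<tau> * \<bar>x\<bar>) \<partial>p)"
    using integrable_exp_moment
    by (intro Bochner_Integration.integral_norm_bound_integral[OF integrable_exp_dominated[OF assms] _ assms(2)]) simp
  also have "\<dots> \<le> C * B"
    using integral_exp_moment_bounds \<open>0 \<le> C\<close> by (simp add: mult_left_mono)
  finally show ?thesis .
qed

lemma cfz_sums_power_series:
  assumes "\<bar>Im z\<bar> + norm (w - z) \<le> \<tau>"
  shows "(\<lambda>k. (\<integral>x. exp (\<i> * z * of_real x) * (\<i> * of_real x) ^ k / fact k \<partial>p) * (w - z) ^ k)
           sums cfz p w"
proof -
  define t where "t k x = exp (\<i> * z * of_real x) * (\<i> * of_real x * (w - z)) ^ k / fact k" for k x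
  have t_meas: "t k \<in> borel_measurable borel" for k
    unfolding t_def by (intro borel_measurable_continuous_onI continuous_intros) auto
  have t_sum_bound: "norm (\<Sum>k\<in>K. t k x) \<le> exp (\<tau> * \<bar>x\<bar>)" if "finite K" for K x
    unfolding t_def by (rule norm_sum_exp_series_le[OF assms that])
  have t_int: "integrable p (t k)" for k
    using t_sum_bound[of "{k}"] by (intro integrable_exp_dominated[OF t_meas, of _ 1]) simp
  have "(\<lambda>n. \<integral>x. (\<Sum>k<n. t k x) \<partial>p) \<longlonglongrightarrow> cfz p w"
    unfolding cfz_def
  proof (rule integral_dominated_convergence[where w="\<lambda>x. exp (\<tau> * \<bar>x\<bar>)"])
    show "AE x in p. (\<lambda>n. \<Sum>k<n. t k x) \<longlonglongrightarrow> exp (\<i> * w * of_real x)"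
    proof (intro AE_I2)
      fix x
      have "(\<lambda>k. exp (\<i> * z * of_real x) * ((\<i> * of_real x * (w - z)) ^ k /\<^sub>R fact k))
              sums (exp (\<i> * z * of_real x) * exp (\<i> * of_real x * (w - z)))"
        by (intro sums_mult exp_converges)
      then show "(\<lambda>n. \<Sum>k<n. t k x) \<longlonglongrightarrow> exp (\<i> * w * of_real x)"
        by (simp add: sums_def t_def scaleR_conv_of_real divide_inverse mult_ac
                      exp_add[symmetric] algebra_simps)
    qed
  qed (use t_sum_bound integrable_exp_moment in \<open>auto intro!: borel_measurable_p
         borel_measurable_sum t_meas borel_measurable_continuous_onI continuous_intros\<close>)
  moreover have "(\<integral>x. t k x \<partial>p)
      = (\<integral>x. exp (\<i> * z * of_real x) * (\<i> * of_real x) ^ k / fact k \<partial>p) * (w - z) ^ k" for k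
  proof -
    have "t k = (\<lambda>x. (w - z) ^ k * (exp (\<i> * z * of_real x) * (\<i> * of_real x) ^ k / fact k))"
      by (simp add: fun_eq_iff t_def power_mult_distrib mult_ac)
    then show ?thesis
      by (simp only: integral_mult_right_zero mult.commute)
  qed
  then have "(\<integral>x. (\<Sum>k<n. t k x) \<partial>p)
      = (\<Sum>k<n. (\<integral>x. exp (\<i> * z * of_real x) * (\<i> * of_real x) ^ k / fact k \<partial>p) * (w - z) ^ k)" for n
    using t_int by (simp add: integral_sum)
  ultimately show ?thesis
    by (simp add: sums_def)
qed

lemma cfz_analytic_on_strip:
  assumes "\<eta> < \<tau>"
  shows "cfz p analytic_on strip \<eta>"
  unfolding analytic_on_def
proof
  fix z assume z: "z \<in> strip \<eta>"
  have "cfz p holomorphic_on ball z (\<tau> - \<eta>)"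
    by (rule power_series_holomorphic, rule cfz_sums_power_series)
       (use z in \<open>auto simp: strip_def dist_norm norm_minus_commute\<close>)
  then show "\<exists>e>0. cfz p holomorphic_on ball z e"
    using assms by (intro exI[of _ "\<tau> - \<eta>"]) auto
qed

lemma integrable_exp_i_mult:
  assumes "\<bar>Im z\<bar> \<le> \<tau>"
  shows "integrable p (\<lambda>x. exp (\<i> * z * of_real x))"
  using norm_exp_i_mult_le[OF assms]
  by (intro integrable_exp_dominated[of _ 1] borel_measurable_continuous_onI continuous_intros) simp

lemma integrable_identity: "integrable p (\<lambda>x. x)"
  using abs_le_exp_mult_abs[OF tau_pos]
  by (intro integrable_exp_dominated[of _ "1 / \<tau>"]) auto

lemma cfz_taylor_bound:
  assumes "norm z \<le> \<tau> / 2"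
  shows "norm (cfz p z - 1 - \<i> * of_real (mean p) * z) \<le> 8 * B / \<tau>\<^sup>2 * norm z ^ 2"
proof -
  have "\<bar>Im z\<bar> \<le> \<tau>"
    using abs_Im_le_cmod[of z] assms tau_pos by linarith
  then have int_exp: "integrable p (\<lambda>x. exp (\<i> * z * of_real x) - 1)"
    by (intro Bochner_Integration.integrable_diff integrable_exp_i_mult) auto
  have "(\<integral>x. exp (\<i> * z * of_real x) - 1 \<partial>p) = cfz p z - 1"
    using integrable_exp_i_mult[OF \<open>\<bar>Im z\<bar> \<le> \<tau>\<close>]
    by (simp add: cfz_def prob_space Bochner_Integration.integral_diff)
  moreover have "(\<integral>x. \<i> * z * of_real x \<partial>p) = \<i> * of_real (mean p) * z"
    by (simp add: mean_def)
  ultimately have "cfz p z - 1 - \<i> * of_real (mean p) * z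
      = (\<integral>x. exp (\<i> * z * of_real x) - 1 \<partial>p) - (\<integral>x. \<i> * z * of_real x \<partial>p)"
    by (simp add: mean_def)
  also have "\<dots> = (\<integral>x. exp (\<i> * z * of_real x) - 1 - \<i> * z * of_real x \<partial>p)"
    using integrable_identity
    by (intro Bochner_Integration.integral_diff[symmetric] int_exp) auto
  also have "norm \<dots> \<le> 8 / \<tau>\<^sup>2 * norm z ^ 2 * B"
  proof (rule norm_integral_exp_dominated)
    fix x
    have "norm (exp (\<i> * z * of_real x) - 1 - \<i> * z * of_real x)
        \<le> norm z ^ 2 * x\<^sup>2 * exp (norm z * \<bar>x\<bar>)"
      using norm_exp_sub_one_sub_le[of "\<i> * z * of_real x"] by (simp add: norm_mult power_mult_distrib)
    also have "\<dots> \<le> norm z ^ 2 * (8 * exp (\<tau> / 2 * \<bar>x\<bar>) / \<tau>\<^sup>2) * exp (\<tau> / 2 * \<bar>x\<bar>)"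
      using power2_le_exp_mult_abs[of "\<tau> / 2" x] tau_pos mult_right_mono[OF assms, of "\<bar>x\<bar>"]
      by (intro mult_mono mult_left_mono) (simp_all add: power_divide)
    also have "\<dots> = 8 / \<tau>\<^sup>2 * norm z ^ 2 * exp (\<tau> * \<bar>x\<bar>)"
      by (simp add: mult_exp_exp)
    finally show "norm (exp (\<i> * z * of_real x) - 1 - \<i> * z * of_real x)
        \<le> 8 / \<tau>\<^sup>2 * norm z ^ 2 * exp (\<tau> * \<bar>x\<bar>)" .
  qed (intro borel_measurable_continuous_onI continuous_intros)
  finally show ?thesis
    by (simp add: mult_ac)
qed

lemma cfz_sub_cfz_Re_bound:
  assumes "\<bar>Im z\<bar> \<le> \<tau> / 2"
  shows "norm (cfz p z - cfz p (Re z)) \<le> 2 * B / \<tau> * \<bar>Im z\<bar>"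
proof -
  have "cfz p z - cfz p (Re z) = (\<integral>x. exp (\<i> * z * of_real x) - exp (\<i> * Re z * of_real x) \<partial>p)"
    using assms tau_pos integrable_exp_i_mult[of z] integrable_exp_i_mult[of "Re z"]
    by (simp add: cfz_def)
  also have "norm \<dots> \<le> 2 / \<tau> * \<bar>Im z\<bar> * B"
  proof (rule norm_integral_exp_dominated)
    fix x
    have "\<i> * z * of_real x = \<i> * Re z * of_real x + of_real (- Im z * x)"
      by (simp add: complex_eq_iff)
    then have "exp (\<i> * z * of_real x) = exp (\<i> * Re z * of_real x) * of_real (exp (- Im z * x))"
      by (simp only: exp_add exp_of_real)
    then have "exp (\<i> * z * of_real x) - exp (\<i> * Re z * of_real x)
        = exp (\<i> * Re z * of_real x) * of_real (exp (- Im z * x) - 1)"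
      by (simp add: algebra_simps)
    then have "norm (exp (\<i> * z * of_real x) - exp (\<i> * Re z * of_real x)) = \<bar>exp (- Im z * x) - 1\<bar>"
      by (simp add: norm_mult del: of_real_diff)
    also have "\<dots> \<le> \<bar>Im z\<bar> * \<bar>x\<bar> * exp (\<tau> / 2 * \<bar>x\<bar>)"
    proof -
      have "\<bar>exp (- Im z * x) - 1\<bar> \<le> \<bar>Im z\<bar> * \<bar>x\<bar> * exp (\<bar>Im z\<bar> * \<bar>x\<bar>)"
        using abs_exp_sub_one_le[of "- Im z * x"] by (simp add: abs_mult)
      also have "\<dots> \<le> \<bar>Im z\<bar> * \<bar>x\<bar> * exp (\<tau> / 2 * \<bar>x\<bar>)"
        using mult_right_mono[OF assms, of "\<bar>x\<bar>"] by (intro mult_left_mono) simp_all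
      finally show ?thesis .
    qed
    also have "\<dots> \<le> \<bar>Im z\<bar> * (2 / \<tau> * exp (\<tau> / 2 * \<bar>x\<bar>)) * exp (\<tau> / 2 * \<bar>x\<bar>)"
      using abs_le_exp_mult_abs[of "\<tau> / 2" x] tau_pos
      by (intro mult_right_mono mult_left_mono) (auto simp: field_simps)
    also have "\<dots> = 2 / \<tau> * \<bar>Im z\<bar> * exp (\<tau> * \<bar>x\<bar>)"
      by (simp add: mult_exp_exp)
    finally show "norm (exp (\<i> * z * of_real x) - exp (\<i> * Re z * of_real x))
        \<le> 2 / \<tau> * \<bar>Im z\<bar> * exp (\<tau> * \<bar>x\<bar>)" .
  qed (intro borel_measurable_continuous_onI continuous_intros)
  finally show ?thesis
    by (simp add: mult_ac)
qed

lemma Kfun_bound_near_0: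
  assumes "0 < c" "c \<le> mean p" "z \<noteq> 0" "norm z \<le> \<tau> / 2" "8 * B / \<tau>\<^sup>2 * norm z \<le> c / 2"
  shows "cfz p z \<noteq> 1" "norm (Kfun p z) \<le> 16 * B / (\<tau>\<^sup>2 * c\<^sup>2)"
proof -
  define d where "d = - \<i> * of_real (mean p) * z"
  have norm_d: "norm d = mean p * norm z"
    using assms(1,2) by (simp add: d_def norm_mult)
  have taylor: "norm (d - (1 - cfz p z)) \<le> 8 * B / \<tau>\<^sup>2 * norm z ^ 2"
    using cfz_taylor_bound[OF assms(4)] by (simp add: d_def algebra_simps)
  also have "\<dots> \<le> c / 2 * norm z"
    using mult_right_mono[OF assms(5) norm_ge_zero[of z]] by (simp add: power2_eq_square mult_ac)
  also have "\<dots> \<le> norm d / 2"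
    using assms(2) norm_d by (simp add: mult_right_mono)
  finally have close: "norm (d - (1 - cfz p z)) \<le> norm d / 2" .
  have "d \<noteq> 0"
    using assms(1-3) by (simp add: d_def)
  note inv = norm_inverse_diff_le[OF close this]
  then show "cfz p z \<noteq> 1"
    by simp
  have "norm (Kfun p z) \<le> 2 * norm (d - (1 - cfz p z)) / norm d ^ 2"
    using inv(2) by (simp add: Kfun_def d_def)
  also have "\<dots> \<le> 2 * (8 * B / \<tau>\<^sup>2 * norm z ^ 2) / norm d ^ 2"
    using taylor by (intro divide_right_mono mult_left_mono) auto
  also have "\<dots> = 16 * B / (\<tau>\<^sup>2 * mean p ^ 2)"
    using assms(1-3) norm_d by (simp add: field_simps power2_eq_square)
  also have "\<dots> \<le> 16 * B / (\<tau>\<^sup>2 * c\<^sup>2)"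
    using assms(1,2) tau_pos exp_moment_bound_ge_1
    by (intro divide_left_mono mult_left_mono power_mono mult_pos_pos) auto
  finally show "norm (Kfun p z) \<le> 16 * B / (\<tau>\<^sup>2 * c\<^sup>2)" .
qed

lemma Kfun_bound:
  assumes c: "0 < c" "c \<le> mean p"
    and r: "0 < r" "r \<le> \<tau> / 2" "8 * B / \<tau>\<^sup>2 * r \<le> c / 2"
    and \<delta>: "0 < \<delta>" "\<And>x. r / 2 \<le> \<bar>x\<bar> \<Longrightarrow> \<delta> \<le> Re (1 - cfz p (of_real x))"
    and \<eta>: "\<eta> \<le> r / 2" "2 * B / \<tau> * \<eta> \<le> \<delta> / 2"
    and z: "z \<in> strip \<eta> - {0}"
  shows "cfz p z \<noteq> 1 \<and> norm (Kfun p z) \<le> max (16 * B / (\<tau>\<^sup>2 * c\<^sup>2)) (2 / \<delta> + 1 / (c * r))"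
proof (cases "norm z \<le> r")
  case True
  have "8 * B / \<tau>\<^sup>2 * norm z \<le> 8 * B / \<tau>\<^sup>2 * r"
    using True exp_moment_bound_ge_1 by (intro mult_left_mono) auto
  then have small: "8 * B / \<tau>\<^sup>2 * norm z \<le> c / 2"
    using r(3) by linarith
  have "z \<noteq> 0" "norm z \<le> \<tau> / 2"
    using z True r(2) by auto
  with Kfun_bound_near_0[OF c _ _ small] show ?thesis
    by (simp add: le_max_iff_disj)
next
  case False
  have Im_z: "\<bar>Im z\<bar> \<le> \<eta>"
    using z by (simp add: strip_def)
  have "r / 2 \<le> \<bar>Re z\<bar>"
    using False Im_z \<eta>(1) cmod_le[of z] by linarith
  then have "\<delta> \<le> Re (1 - cfz p (Re z))"
    by (rule \<delta>(2))
  also have "\<dots> \<le> norm (1 - cfz p z) + norm (cfz p z - cfz p (Re z))"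
    using complex_Re_le_cmod[of "1 - cfz p (Re z)"] norm_triangle_ineq[of "1 - cfz p z" "cfz p z - cfz p (Re z)"]
    by simp
  also have "norm (cfz p z - cfz p (Re z)) \<le> 2 * B / \<tau> * \<bar>Im z\<bar>"
    using Im_z \<eta>(1) r(2) by (intro cfz_sub_cfz_Re_bound) linarith
  also have "\<dots> \<le> 2 * B / \<tau> * \<eta>"
    using Im_z tau_pos exp_moment_bound_ge_1 by (intro mult_left_mono) auto
  finally have "\<delta> / 2 \<le> norm (1 - cfz p z)"
    using \<eta>(2) by linarith
  then show ?thesis
    using Kfun_bound_away_from_0[OF c r(1), of z "\<delta> / 2"] False \<delta>(1) by auto
qed

end

section \<open>Uniform bounds on a strip\<close>

lemma uniform_Kfun_bound_on_strip:
  fixes \<M> :: "real measure set"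
  assumes mom: "0 < \<tau>" "0 < B" "\<And>p. p \<in> \<M> \<Longrightarrow> exp_moment p \<tau> B"
    and mean: "0 < c" "\<And>p. p \<in> \<M> \<Longrightarrow> c \<le> mean p"
    and nondeg: "\<And>\<rho>. 0 < \<rho> \<Longrightarrow> \<exists>\<delta>>0. \<forall>p\<in>\<M>. \<forall>x. \<rho> \<le> \<bar>x\<bar> \<longrightarrow> \<delta> \<le> Re (1 - cfz p (of_real x))"
  shows "\<exists>\<eta>>0. (\<forall>p\<in>\<M>. cfz p analytic_on strip \<eta> \<and> (\<forall>z\<in>strip \<eta> - {0}. cfz p z \<noteq> 1))
              \<and> (\<exists>L. \<forall>p\<in>\<M>. \<forall>z\<in>strip \<eta> - {0}. norm (Kfun p z) \<le> L)"
proof -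
  define r where "r = min (\<tau> / 2) (c * \<tau>\<^sup>2 / (16 * B))"
  have r: "0 < r" "r \<le> \<tau> / 2"
    using mom mean(1) by (auto simp: r_def)
  have "8 * B / \<tau>\<^sup>2 * r \<le> 8 * B / \<tau>\<^sup>2 * (c * \<tau>\<^sup>2 / (16 * B))"
    using mom by (intro mult_left_mono) (auto simp: r_def)
  with mom have r_small: "8 * B / \<tau>\<^sup>2 * r \<le> c / 2"
    by (simp add: field_simps)
  obtain \<delta> where \<delta>: "0 < \<delta>" "\<forall>p\<in>\<M>. \<forall>x. r / 2 \<le> \<bar>x\<bar> \<longrightarrow> \<delta> \<le> Re (1 - cfz p (of_real x))"
    using nondeg[of "r / 2"] r(1) by auto
  define \<eta> where "\<eta> = min (r / 2) (\<delta> * \<tau> / (4 * B))"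
  have \<eta>: "0 < \<eta>" "\<eta> \<le> r / 2" "\<eta> < \<tau>"
    using r \<delta>(1) mom by (auto simp: \<eta>_def)
  have "2 * B / \<tau> * \<eta> \<le> 2 * B / \<tau> * (\<delta> * \<tau> / (4 * B))"
    using mom by (intro mult_left_mono) (auto simp: \<eta>_def)
  with mom have \<eta>_small: "2 * B / \<tau> * \<eta> \<le> \<delta> / 2"
    by (simp add: field_simps)
  have "cfz p analytic_on strip \<eta> \<and> (\<forall>z\<in>strip \<eta> - {0}. cfz p z \<noteq> 1
          \<and> norm (Kfun p z) \<le> max (16 * B / (\<tau>\<^sup>2 * c\<^sup>2)) (2 / \<delta> + 1 / (c * r)))"
    if "p \<in> \<M>" for p
  proof -
    interpret exp_moment p \<tau> B
      using mom(3) that .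
    show ?thesis
      using cfz_analytic_on_strip[OF \<eta>(3)] \<delta>(2) that
        Kfun_bound[OF mean(1) mean(2)[OF that] r r_small \<delta>(1) _ \<eta>(2) \<eta>_small]
      by blast
  qed
  then show ?thesis
    using \<eta>(1) by blast
qed

section \<open>Bounded densities and \<open>1 - cos\<close>\<close>

lemma cos_le_cos_or_near_2pi_multiple:
  assumes "0 \<le> w" "w \<le> pi"
  obtains k :: int where "\<bar>u - 2 * pi * k\<bar> \<le> pi" "\<bar>u - 2 * pi * k\<bar> < w \<or> cos u \<le> cos w"
proof -
  obtain k :: int where k: "arccos (cos u) = \<bar>u - of_int k * (2 * pi)\<bar>"
    using arccos_cos_eq_abs_2pi by blast
  have le_pi: "arccos (cos u) \<le> pi"
    by (rule arccos_ubound) simp_all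
  have "cos u \<le> cos w" if "w \<le> arccos (cos u)"
    using cos_monotone_0_pi_le[OF assms(1) that le_pi] by simp
  then have "\<bar>u - 2 * pi * k\<bar> < w \<or> cos u \<le> cos w"
    using k by (cases "w \<le> arccos (cos u)") (auto simp: mult_ac)
  with le_pi k show ?thesis
    using that[of k] by (simp add: mult_ac)
qed

lemma one_minus_cos_ge_or_near_lattice:
  assumes w: "0 \<le> w" "w \<le> pi" and "x \<noteq> 0" "\<bar>t\<bar> \<le> T"
  shows "(\<exists>k\<in>{-(\<lceil>T * \<bar>x\<bar> / (2 * pi)\<rceil> + 1)..\<lceil>T * \<bar>x\<bar> / (2 * pi)\<rceil> + 1}.
            \<bar>t - 2 * pi * k / x\<bar> < w / \<bar>x\<bar>) \<or> 1 - cos w \<le> 1 - cos (x * t)"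
proof -
  obtain k :: int where k: "\<bar>x * t - 2 * pi * k\<bar> \<le> pi" "\<bar>x * t - 2 * pi * k\<bar> < w \<or> cos (x * t) \<le> cos w"
    using cos_le_cos_or_near_2pi_multiple[OF w] by blast
  have "\<bar>x * t\<bar> \<le> T * \<bar>x\<bar>"
    using mult_right_mono[OF assms(4) abs_ge_zero[of x]] by (simp add: abs_mult mult.commute)
  moreover have "2 * pi * \<bar>k\<bar> \<le> \<bar>x * t\<bar> + \<bar>x * t - 2 * pi * k\<bar>"
    using abs_triangle_ineq4[of "x * t" "x * t - 2 * pi * k"] by (simp add: abs_mult)
  ultimately have "2 * pi * \<bar>k\<bar> \<le> T * \<bar>x\<bar> + pi"
    using k(1) by linarith
  then have "\<bar>k\<bar> \<le> T * \<bar>x\<bar> / (2 * pi) + 1 / 2"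
    by (simp add: field_simps)
  then have "\<bar>real_of_int k\<bar> \<le> of_int (\<lceil>T * \<bar>x\<bar> / (2 * pi)\<rceil> + 1)"
    using le_of_int_ceiling[of "T * \<bar>x\<bar> / (2 * pi)"] by linarith
  then have "k \<in> {-(\<lceil>T * \<bar>x\<bar> / (2 * pi)\<rceil> + 1)..\<lceil>T * \<bar>x\<bar> / (2 * pi)\<rceil> + 1}"
    by (metis abs_le_iff atLeastAtMost_iff minus_le_iff of_int_abs of_int_le_iff)
  moreover have "\<bar>x * t - 2 * pi * k\<bar> = \<bar>x\<bar> * \<bar>t - 2 * pi * k / x\<bar>"
    using assms(3) by (simp add: abs_mult[symmetric] algebra_simps)
  ultimately show ?thesis
    using k(2) assms(3) by (auto simp: field_simps)
qed

lemma sum_integral_indicator_interval_le: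
  fixes \<phi> :: "real \<Rightarrow> real"
  assumes "\<And>t. \<phi> t \<le> M" "integrable lborel \<phi>" "0 \<le> r"
  shows "(\<Sum>k\<in>K. \<integral>t. indicator {c k - r<..<c k + r} t * \<phi> t \<partial>lborel) \<le> real (card K) * (2 * r * M)"
proof -
  have "(\<integral>t. indicator {a<..<b} t * \<phi> t \<partial>lborel) \<le> (b - a) * M" if "a \<le> b" for a b
  proof -
    have "(\<integral>t. indicator {a<..<b} t * \<phi> t \<partial>lborel) \<le> (\<integral>t. indicator {a<..<b} t * M \<partial>lborel)"
      using assms(1,2) that integrable_mult_indicator[OF _ assms(2), of "{a<..<b}"]
      by (intro integral_mono integrable_mult_left integrable_real_indicator) (auto split: split_indicator)
    also have "\<dots> = (b - a) * M"
      using that by simp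
    finally show ?thesis .
  qed
  from this[of "c k - r" "c k + r" for k] assms(3)
  have "(\<integral>t. indicator {c k - r<..<c k + r} t * \<phi> t \<partial>lborel) \<le> 2 * r * M" for k
    by simp
  then show ?thesis
    using sum_mono[of K _ "\<lambda>_. 2 * r * M"] by simp
qed

lemma one_minus_cos_lower_bound_off_intervals:
  fixes \<phi> :: "real \<Rightarrow> real"
  assumes "0 \<le> \<phi> t" "finite K" "(\<exists>k\<in>K. t \<in> I k) \<or> 1 - cos w \<le> 1 - cos u"
  shows "(1 - cos w) * (\<phi> t - (\<Sum>k\<in>K. indicator (I k) t * \<phi> t)) \<le> \<phi> t * (1 - cos u)"
proof -
  have cos_w: "0 \<le> 1 - cos w"
    by simp
  have sum_nonneg: "0 \<le> (\<Sum>k\<in>K. indicator (I k) t * \<phi> t)"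
    using assms(1) by (intro sum_nonneg) auto
  from assms(3) show ?thesis
  proof
    assume "\<exists>k\<in>K. t \<in> I k"
    then obtain k where k: "k \<in> K" "t \<in> I k"
      by blast
    then have "\<phi> t = indicator (I k) t * \<phi> t"
      by simp
    also have "\<dots> \<le> (\<Sum>k\<in>K. indicator (I k) t * \<phi> t)"
      by (rule member_le_sum) (use k assms(1,2) in auto)
    finally have "\<phi> t \<le> (\<Sum>k\<in>K. indicator (I k) t * \<phi> t)" .
    then show ?thesis
      using cos_w assms(1) by (simp add: mult_nonneg_nonpos order_trans[OF _ mult_nonneg_nonneg])
  next
    assume "1 - cos w \<le> 1 - cos u"
    then have "(1 - cos w) * \<phi> t \<le> (1 - cos u) * \<phi> t"
      using assms(1) by (rule mult_right_mono)
    moreover have "0 \<le> (1 - cos w) * (\<Sum>k\<in>K. indicator (I k) t * \<phi> t)"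
      using sum_nonneg cos_w by simp
    ultimately show ?thesis
      by (simp add: right_diff_distrib mult.commute)
  qed
qed

lemma integrable_mult_one_minus_cos:
  fixes \<phi> :: "real \<Rightarrow> real"
  assumes "integrable lborel \<phi>"
  shows "integrable lborel (\<lambda>t. \<phi> t * (1 - cos (x * t)))"
proof (rule Bochner_Integration.integrable_bound)
  show "integrable lborel (\<lambda>t. 2 * \<phi> t)"
    using assms by simp
  show "(\<lambda>t. \<phi> t * (1 - cos (x * t))) \<in> borel_measurable lborel"
    using borel_measurable_integrable[OF assms] by measurable
  show "AE t in lborel. norm (\<phi> t * (1 - cos (x * t))) \<le> norm (2 * \<phi> t)"
    by (intro AE_I2) (simp add: abs_mult mult.commute mult_left_mono)
qed

lemma card_ceiling_window_le:
  fixes y :: real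
  assumes "0 \<le> y"
  shows "real (card {-(\<lceil>y\<rceil> + 1)..\<lceil>y\<rceil> + 1}) \<le> 2 * y + 5"
proof -
  have "0 \<le> \<lceil>y\<rceil>"
    using assms by simp
  then show ?thesis
    using ceiling_correct[of y] by simp
qed

lemma integral_one_minus_cos_ge:
  fixes \<phi> :: "real \<Rightarrow> real"
  assumes \<phi>: "\<And>t. 0 \<le> \<phi> t" "\<And>t. \<phi> t \<le> M" "\<And>t. T < \<bar>t\<bar> \<Longrightarrow> \<phi> t = 0"
      "integrable lborel \<phi>" "(\<integral>t. \<phi> t \<partial>lborel) = 1"
    and "0 \<le> T" "x \<noteq> 0"
    and w: "0 < w" "w \<le> pi" "2 * M * w * (T / pi + 5 / \<bar>x\<bar>) \<le> 1 / 2"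
  shows "(1 - cos w) / 2 \<le> (\<integral>t. \<phi> t * (1 - cos (x * t)) \<partial>lborel)"
proof -
  define N :: int where "N = \<lceil>T * \<bar>x\<bar> / (2 * pi)\<rceil> + 1"
  define I where "I k = {2 * pi * k / x - w / \<bar>x\<bar> <..< 2 * pi * k / x + w / \<bar>x\<bar>}" for k :: int
  define S where "S t = (\<Sum>k\<in>{-N..N}. indicator (I k) t * \<phi> t)" for t
  have pointwise: "(1 - cos w) * (\<phi> t - S t) \<le> \<phi> t * (1 - cos (x * t))" for t
  proof (cases "T < \<bar>t\<bar>")
    case True
    then show ?thesis
      using \<phi>(3) by (simp add: S_def)
  next
    case False
    then show ?thesis
      using one_minus_cos_ge_or_near_lattice[of w x t T] w \<open>x \<noteq> 0\<close> \<phi>(1)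
      unfolding S_def by (intro one_minus_cos_lower_bound_off_intervals) (auto simp: N_def I_def abs_diff_less_iff)
  qed
  have int_I: "integrable lborel (\<lambda>t. indicator (I k) t * \<phi> t)" for k
    using integrable_mult_indicator[OF _ \<phi>(4), of "I k"] by (simp add: I_def)
  then have int_S: "integrable lborel S"
    unfolding S_def by (rule Bochner_Integration.integrable_sum)
  have "(\<integral>t. S t \<partial>lborel) = (\<Sum>k\<in>{-N..N}. \<integral>t. indicator (I k) t * \<phi> t \<partial>lborel)"
    unfolding S_def using int_I by (rule Bochner_Integration.integral_sum)
  also have "\<dots> \<le> real (card {-N..N}) * (2 * (w / \<bar>x\<bar>) * M)"
    using sum_integral_indicator_interval_le[OF \<phi>(2,4), where r = "w / \<bar>x\<bar>" and K = "{-N..N}"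
        and c = "\<lambda>k. 2 * pi * k / x"] w(1)
    by (simp add: I_def)
  also have "\<dots> \<le> (T * \<bar>x\<bar> / pi + 5) * (2 * (w / \<bar>x\<bar>) * M)"
    using card_ceiling_window_le[of "T * \<bar>x\<bar> / (2 * pi)"] \<open>0 \<le> T\<close> \<phi>(1,2)[of 0] w(1)
    by (intro mult_right_mono) (auto simp: N_def)
  also have "\<dots> \<le> 1 / 2"
    using w(3) \<open>x \<noteq> 0\<close> by (simp add: field_simps)
  finally have "(1 - cos w) * (1 / 2) \<le> (1 - cos w) * (1 - (\<integral>t. S t \<partial>lborel))"
    by (intro mult_left_mono) auto
  also have "\<dots> = (\<integral>t. (1 - cos w) * (\<phi> t - S t) \<partial>lborel)"
    using \<phi>(4,5) int_S by (simp add: Bochner_Integration.integral_diff)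
  also have "\<dots> \<le> (\<integral>t. \<phi> t * (1 - cos (x * t)) \<partial>lborel)"
    using \<phi>(4) int_S integrable_mult_one_minus_cos[OF \<phi>(4)] pointwise by (intro integral_mono) auto
  finally show ?thesis
    by simp
qed

lemma uniform_integral_one_minus_cos_lower_bound:
  fixes M T \<rho> :: real
  assumes "0 < M" "0 \<le> T" "0 < \<rho>"
  obtains d where "0 < d"
    "\<And>\<phi> x. (\<And>t. 0 \<le> \<phi> t) \<Longrightarrow> (\<And>t. \<phi> t \<le> M) \<Longrightarrow> (\<And>t. T < \<bar>t\<bar> \<Longrightarrow> \<phi> t = 0) \<Longrightarrow>
      integrable lborel \<phi> \<Longrightarrow> (\<integral>t. \<phi> t \<partial>lborel) = 1 \<Longrightarrow> \<rho> \<le> \<bar>x\<bar> \<Longrightarrow>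
      d \<le> (\<integral>t. \<phi> t * (1 - cos (x * t)) \<partial>lborel)"
proof -
  define q where "q = T / pi + 5 / \<rho>"
  have q: "0 < q"
    using assms by (simp add: q_def add_nonneg_pos)
  define w where "w = min pi (1 / (4 * M * q))"
  have w: "0 < w" "w \<le> pi"
    using assms q by (auto simp: w_def)
  have small: "2 * M * w * (T / pi + 5 / \<bar>x\<bar>) \<le> 1 / 2" if "\<rho> \<le> \<bar>x\<bar>" for x
  proof -
    have "2 * M * w * (T / pi + 5 / \<bar>x\<bar>) \<le> 2 * M * w * q"
      using assms that w unfolding q_def by (intro mult_left_mono add_left_mono divide_left_mono) auto
    also have "\<dots> \<le> 2 * M * (1 / (4 * M * q)) * q"
      using assms q by (intro mult_right_mono mult_left_mono) (auto simp: w_def)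
    also have "\<dots> = 1 / 2"
      using assms q by (simp add: field_simps)
    finally show ?thesis .
  qed
  have "0 < 1 - cos w"
    using cos_monotone_0_pi[of 0 w] w by simp
  then show ?thesis
    using integral_one_minus_cos_ge[of _ M T] small assms(2,3) w
    by (intro that[of "(1 - cos w) / 2"]) auto
qed

section \<open>Mixtures with smooth compactly supported densities\<close>

lemma integral_le_of_scaled_measure_le:
  fixes g :: "real \<Rightarrow> real"
  assumes "finite_measure p" "finite_measure \<Phi>" "sets p = sets borel" "sets \<Phi> = sets borel"
    and dom: "0 \<le> a" "\<And>A. A \<in> sets borel \<Longrightarrow> a * measure \<Phi> A \<le> measure p A"
    and g: "g \<in> borel_measurable borel" "\<And>x. 0 \<le> g x" "\<And>x. g x \<le> C"
  shows "a * (\<integral>x. g x \<partial>\<Phi>) \<le> (\<integral>x. g x \<partial>p)"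
proof -
  interpret P: finite_measure p by fact
  interpret F: finite_measure \<Phi> by fact
  have meas: "g \<in> borel_measurable p" "g \<in> borel_measurable \<Phi>"
    using g(1) assms(3,4) by (simp_all cong: measurable_cong_sets)
  have int: "integrable p g" "integrable \<Phi> g"
    using meas g(2,3) by (auto intro!: P.integrable_const_bound[where B = C] F.integrable_const_bound[where B = C])
  define D where "D = density \<Phi> (\<lambda>_. ennreal a)"
  have sets_D: "sets D = sets p"
    using assms(3,4) by (simp add: D_def)
  have "emeasure D A \<le> emeasure p A" for A
  proof (cases "A \<in> sets borel")
    case True
    then have "emeasure D A = ennreal (a * measure \<Phi> A)"
      using assms(4) dom(1) by (simp add: D_def emeasure_density_const F.emeasure_eq_measure ennreal_mult)
    also have "\<dots> \<le> emeasure p A"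
      using dom(2)[OF True] by (simp add: P.emeasure_eq_measure ennreal_leI)
    finally show ?thesis .
  next
    case False
    then show ?thesis
      using sets_D assms(3) by (simp add: emeasure_notin_sets)
  qed
  then have le: "D \<le> p"
    using sets_D sets_eq_imp_space_eq[OF sets_D] by (simp add: le_measure_iff le_fun_def)
  have "ennreal (a * (\<integral>x. g x \<partial>\<Phi>)) = (\<integral>\<^sup>+x. ennreal (g x) \<partial>D)"
    using int(2) meas(2) dom(1) g(2)
    by (simp add: D_def nn_integral_density nn_integral_cmult nn_integral_eq_integral ennreal_mult)
  also have "\<dots> \<le> (\<integral>\<^sup>+x. ennreal (g x) \<partial>p)"
    using sets_D le by (rule nn_integral_mono_measure)
  also have "\<dots> = ennreal (\<integral>x. g x \<partial>p)"
    using int(1) g(2) by (simp add: nn_integral_eq_integral)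
  finally show ?thesis
    using g(2) by (simp add: ennreal_le_iff integral_nonneg)
qed

lemma integrable_density_of_prob_space:
  fixes \<phi> :: "real \<Rightarrow> real"
  assumes "prob_space (density lborel (\<lambda>x. ennreal (\<phi> x)))" "\<And>x. 0 \<le> \<phi> x" "\<phi> \<in> borel_measurable borel"
  shows "integrable lborel \<phi>" "(\<integral>x. \<phi> x \<partial>lborel) = 1"
proof -
  interpret prob_space "density lborel (\<lambda>x. ennreal (\<phi> x))"
    by fact
  have "(\<integral>\<^sup>+x. ennreal (\<phi> x) \<partial>lborel) = ennreal 1"
    using emeasure_space_1 assms(3) by (simp add: emeasure_density)
  then have "integrable lborel \<phi> \<and> (\<integral>x. \<phi> x \<partial>lborel) = 1"
    using assms(2,3) by (subst (asm) nn_integral_eq_integrable) auto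
  then show "integrable lborel \<phi>" "(\<integral>x. \<phi> x \<partial>lborel) = 1"
    by auto
qed

lemma Re_one_minus_cfz_uniform_lower_bound:
  fixes \<M> :: "real measure set" and \<Phi> :: "real measure \<Rightarrow> real measure"
    and \<phi> :: "real measure \<Rightarrow> real \<Rightarrow> real"
  assumes p: "\<And>p. p \<in> \<M> \<Longrightarrow> prob_space p \<and> sets p = sets borel"
    and \<Phi>: "\<And>p. p \<in> \<M> \<Longrightarrow> prob_space (\<Phi> p) \<and> \<Phi> p = density lborel (\<lambda>x. ennreal (\<phi> p x))"
    and dom: "0 < a" "\<And>p A. p \<in> \<M> \<Longrightarrow> A \<in> sets borel \<Longrightarrow> a * measure (\<Phi> p) A \<le> measure p A"
    and \<phi>: "\<And>p x. p \<in> \<M> \<Longrightarrow> 0 \<le> \<phi> p x \<and> \<phi> p x \<le> K"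
      "\<And>p x. p \<in> \<M> \<Longrightarrow> T < \<bar>x\<bar> \<Longrightarrow> \<phi> p x = 0"
      "\<And>p. p \<in> \<M> \<Longrightarrow> \<phi> p \<in> borel_measurable borel"
    and T: "0 \<le> T" and \<rho>: "0 < \<rho>"
  shows "\<exists>\<delta>>0. \<forall>p\<in>\<M>. \<forall>x. \<rho> \<le> \<bar>x\<bar> \<longrightarrow> \<delta> \<le> Re (1 - cfz p (of_real x))"
proof -
  obtain d where d: "0 < d" and lower: "\<And>\<phi> x. (\<And>t. 0 \<le> \<phi> t) \<Longrightarrow> (\<And>t. \<phi> t \<le> max K 1) \<Longrightarrow>
      (\<And>t. T < \<bar>t\<bar> \<Longrightarrow> \<phi> t = 0) \<Longrightarrow> integrable lborel \<phi> \<Longrightarrow> (\<integral>t. \<phi> t \<partial>lborel) = 1 \<Longrightarrow>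
      \<rho> \<le> \<bar>x\<bar> \<Longrightarrow> d \<le> (\<integral>t. \<phi> t * (1 - cos (x * t)) \<partial>lborel)"
    by (rule uniform_integral_one_minus_cos_lower_bound[of "max K 1" T \<rho>])
       (use T \<rho> in \<open>auto simp: less_max_iff_disj\<close>)
  have "a * d \<le> Re (1 - cfz p (of_real x))" if "p \<in> \<M>" "\<rho> \<le> \<bar>x\<bar>" for p x
  proof -
    have \<Phi>_p: "prob_space (\<Phi> p)" "sets (\<Phi> p) = sets borel"
      using \<Phi>[OF that(1)] by auto
    note \<phi>_dens = integrable_density_of_prob_space[of "\<phi> p"]
    have "d \<le> (\<integral>t. \<phi> p t * (1 - cos (x * t)) \<partial>lborel)"
      using \<phi>[OF that(1)] \<Phi>[OF that(1)] \<phi>_dens that(2)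
      by (intro lower) (auto intro: order_trans[OF _ max.cobounded1])
    also have "\<dots> = (\<integral>t. 1 - cos (x * t) \<partial>\<Phi> p)"
      using \<Phi>[OF that(1)] \<phi>(1,3)[OF that(1)] by (simp add: integral_density)
    finally have "a * d \<le> a * (\<integral>t. 1 - cos (x * t) \<partial>\<Phi> p)"
      using dom(1) by (intro mult_left_mono) auto
    also have "\<dots> \<le> (\<integral>t. 1 - cos (x * t) \<partial>p)"
      using p[OF that(1)] \<Phi>_p dom(1) dom(2)[OF that(1)]
      by (intro integral_le_of_scaled_measure_le[where C = 2])
         (auto intro: prob_space.axioms(1) borel_measurable_continuous_onI continuous_intros)
    also have "\<dots> = Re (1 - cfz p (of_real x))"
      using p[OF that(1)] Re_one_minus_cfz_of_real[of p x] by simp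
    finally show ?thesis .
  qed
  then show ?thesis
    using dom(1) d by (intro exI[of _ "a * d"]) auto
qed

lemma abs_le_integral_abs_derivative:
  fixes g g' :: "real \<Rightarrow> real"
  assumes "\<And>t. (g has_real_derivative g' t) (at t)" "continuous_on {a..b} g'" "g a = 0" "x \<in> {a..b}"
  shows "\<bar>g x\<bar> \<le> integral {a..b} (\<lambda>t. \<bar>g' t\<bar>)"
proof -
  have cont: "continuous_on {a..x} g'"
    by (rule continuous_on_subset[OF assms(2)]) (use assms(4) in auto)
  have "(g' has_integral g x - g a) {a..x}"
    using assms(1,4)
    by (intro fundamental_theorem_of_calculus)
       (auto simp: has_real_derivative_iff_has_vector_derivative[symmetric] intro: has_field_derivative_at_within)
  then have "g x = integral {a..x} g'"
    using assms(3) by (simp add: integral_unique)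
  also have "\<bar>\<dots>\<bar> \<le> integral {a..x} (\<lambda>t. \<bar>g' t\<bar>)"
    using integral_norm_bound_integral[of g' "{a..x}" "\<lambda>t. \<bar>g' t\<bar>"] cont
    by (auto intro!: integrable_continuous_interval continuous_intros)
  also have "\<dots> \<le> integral {a..b} (\<lambda>t. \<bar>g' t\<bar>)"
    using assms(2,4) cont
    by (intro integral_subset_le integrable_continuous_interval continuous_intros) auto
  finally show ?thesis .
qed

lemma abs_le_of_integral_abs_second_derivative_le:
  fixes f :: "real \<Rightarrow> real"
  assumes diff: "\<And>x. f differentiable at x" "\<And>x. deriv f differentiable at x"
    and cont: "continuous_on UNIV (deriv (deriv f))"
    and supp: "0 \<le> a" "a < T" "\<And>x. a < \<bar>x\<bar> \<Longrightarrow> f x = 0"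
    and bound: "integral {-T..T} (\<lambda>t. \<bar>deriv (deriv f) t\<bar>) \<le> B"
  shows "\<bar>f x\<bar> \<le> 2 * T * B"
proof -
  have D1: "(f has_real_derivative deriv f t) (at t)" for t
    using diff(1) DERIV_deriv_iff_real_differentiable by blast
  have D2: "(deriv f has_real_derivative deriv (deriv f) t) (at t)" for t
    using diff(2) DERIV_deriv_iff_real_differentiable by blast
  have f'_0: "deriv f t = 0" if "a < \<bar>t\<bar>" for t
  proof -
    have "open {y::real. a < \<bar>y\<bar>}"
      by (intro open_Collect_less continuous_intros)
    then have "((\<lambda>_. 0) has_real_derivative deriv f t) (at t)"
      using supp(3) that by (intro has_field_derivative_transform_within_open[OF D1]) auto
    then show ?thesis
      using DERIV_const DERIV_unique by blast
  qed
  have "0 \<le> integral {-T..T} (\<lambda>t. \<bar>deriv (deriv f) t\<bar>)"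
    using continuous_on_subset[OF cont]
    by (intro integral_nonneg integrable_continuous_interval continuous_intros) auto
  with bound have "0 \<le> B"
    by linarith
  have f'_bound: "\<bar>deriv f t\<bar> \<le> B" for t
    using abs_le_integral_abs_derivative[OF D2 continuous_on_subset[OF cont], of "-T" T t]
      f'_0[of "-T"] f'_0[of t] supp(1,2) bound \<open>0 \<le> B\<close>
    by (cases "t \<in> {-T..T}") auto
  have "continuous_on {-T..T} (deriv f)"
    using D2 by (intro continuous_at_imp_continuous_on ballI DERIV_isCont) auto
  then have "\<bar>f x\<bar> \<le> integral {-T..T} (\<lambda>t. \<bar>deriv f t\<bar>)" if "x \<in> {-T..T}"
    using abs_le_integral_abs_derivative[OF D1, of "-T" T x] supp that by auto
  also have "\<dots> \<le> integral {-T..T} (\<lambda>_. B)" if "x \<in> {-T..T}"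
    using \<open>continuous_on {-T..T} (deriv f)\<close> f'_bound
    by (intro integral_le integrable_continuous_interval continuous_intros) auto
  also have "\<dots> = 2 * T * B" if "x \<in> {-T..T}"
    using that by simp
  finally show ?thesis
    using supp \<open>0 \<le> B\<close> by (cases "x \<in> {-T..T}") auto
qed

theorem lemma3p1:
  fixes \<M> :: "real measure set"
    and lam :: "real measure \<Rightarrow> real"
    and Phi Psi :: "real measure \<Rightarrow> real measure"
    and phi :: "real measure \<Rightarrow> real \<Rightarrow> real"
    and T :: real
  assumes prob: "\<forall>p\<in>\<M>. prob_space p \<and> sets p = sets borel"
    and mean_pos: "\<exists>c>0. \<forall>p\<in>\<M>. c \<le> mean p"
    and expmom: "\<exists>\<tau>>0. \<exists>B::real. \<forall>p\<in>\<M>.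
                   (\<integral>\<^sup>+ x. ennreal (exp (\<tau> * \<bar>x\<bar>)) \<partial>p) \<le> ennreal B"
    and lam_range: "\<forall>p\<in>\<M>. 0 \<le> lam p \<and> lam p < 1"
    and Phi_Psi_prob: "\<forall>p\<in>\<M>. prob_space (Phi p) \<and> sets (Phi p) = sets borel
                          \<and> prob_space (Psi p) \<and> sets (Psi p) = sets borel"
    and mixture: "\<forall>p\<in>\<M>. \<forall>A\<in>sets borel.
                    measure p A = (1 - lam p) * measure (Phi p) A + lam p * measure (Psi p) A"
    and density: "\<forall>p\<in>\<M>. (\<forall>x. 0 \<le> phi p x) \<and>
                    Phi p = density lborel (\<lambda>x. ennreal (phi p x))"
    and lam_sup: "\<exists>c<1. \<forall>p\<in>\<M>. lam p \<le> c"
    and T_pos: "0 < T"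
    and C2: "\<forall>p\<in>\<M>. (\<forall>x. phi p differentiable at x)
                 \<and> (\<forall>x. deriv (phi p) differentiable at x)
                 \<and> continuous_on UNIV (deriv (deriv (phi p)))"
    and supp: "\<forall>p\<in>\<M>. \<exists>a. 0 \<le> a \<and> a < T \<and> (\<forall>x. a < \<bar>x\<bar> \<longrightarrow> phi p x = 0)"
    and d2_bound: "\<exists>B. \<forall>p\<in>\<M>.
                     integral {-T..T} (\<lambda>x. \<bar>deriv (deriv (phi p)) x\<bar>) \<le> B"
  shows "\<exists>\<eta>>0. (\<forall>p\<in>\<M>. cfz p analytic_on strip \<eta>
                    \<and> (\<forall>z\<in>strip \<eta> - {0}. cfz p z \<noteq> 1))
              \<and> (\<exists>L. \<forall>p\<in>\<M>. \<forall>z\<in>strip \<eta> - {0}. norm (Kfun p z) \<le> L)"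
proof -
  obtain c where c: "0 < c" "\<forall>p\<in>\<M>. c \<le> mean p"
    using mean_pos by blast
  obtain \<tau> B where \<tau>: "0 < \<tau>" and B: "\<forall>p\<in>\<M>. (\<integral>\<^sup>+ x. ennreal (exp (\<tau> * \<bar>x\<bar>)) \<partial>p) \<le> ennreal B"
    using expmom by blast
  \<comment> \<open>\<open>B\<close> can only be nonpositive when \<open>\<M>\<close> is empty\<close>
  have mom: "exp_moment p \<tau> (max B 1)" if "p \<in> \<M>" for p
    using prob B \<tau> that
    by (intro exp_moment.intro exp_moment_axioms.intro) (auto intro: order_trans ennreal_leI)
  obtain c1 where c1: "c1 < 1" "\<forall>p\<in>\<M>. lam p \<le> c1"
    using lam_sup by blast
  obtain B2 where B2: "\<forall>p\<in>\<M>. integral {-T..T} (\<lambda>x. \<bar>deriv (deriv (phi p)) x\<bar>) \<le> B2"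
    using d2_bound by blast
  have dom: "(1 - c1) * measure (Phi p) A \<le> measure p A" if "p \<in> \<M>" "A \<in> sets borel" for p A
    using mixture c1 lam_range that by (auto intro!: add_increasing2 mult_right_mono)
  have phi: "\<bar>phi p x\<bar> \<le> 2 * T * B2" "T < \<bar>x\<bar> \<Longrightarrow> phi p x = 0" if "p \<in> \<M>" for p x
    using supp C2 B2 that abs_le_of_integral_abs_second_derivative_le[of "phi p" _ T B2 x] by force+
  have phi_meas: "phi p \<in> borel_measurable borel" if "p \<in> \<M>" for p
    using C2 that by (intro borel_measurable_continuous_onI continuous_at_imp_continuous_on ballI
        differentiable_imp_continuous_within) auto
  show ?thesis
    using c1 phi density T_pos Phi_Psi_prob prob
    by (intro uniform_Kfun_bound_on_strip[OF \<tau> _ mom c(1) c(2)[rule_format]]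
        Re_one_minus_cfz_uniform_lower_bound[where \<Phi> = Phi and \<phi> = phi and a = "1 - c1"
          and K = "2 * T * B2" and T = T]
        dom phi_meas) auto
qed

end
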